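(* Let \(X\) be a nonempty set, let \((Q, \preccurlyeq_{Q})\) be a poset, and let \(d \colon X^{2} \to Q\) be a \(\preccurlyeq_{Q}\)-pseudoultrametric. Then there is a unique partial order \(\preccurlyeq_{Q}^{0}\) on \(Q\) such that \(d\) is a \(\preccurlyeq_{Q}^{0}\)-pseudoultrametric and \(\preccurlyeq_{Q}^{0} \subseteq \preccurlyeq\) holds whenever \(\preccurlyeq\) is a partial order on \(Q\) for which \(d\) is a \(\preccurlyeq\)-pseudoultrametric.
   Context: For a partial order \(\preccurlyeq\) on \(Q\), a mapping \(d\colon X^2\to Q\) is a \(\preccurlyeq\)-pseudoultrametric if \((Q,\preccurlyeq)\) has a smallest element \(q_0\), \(d\) is symmetric, \(d(x,x)=q_0\) for all \(x\in X\), and for every triple \(\langle x_1,x_2,x_3\rangle\) of points of \(X\) there is a permutation \((i_1,i_2,i_3)\) of \((1,2,3)\) with \(d(x_{i_1},x_{i_3})\preccurlyeq d(x_{i_1},x_{i_2})\) and \(d(x_{i_1},x_{i_2})=d(x_{i_2},x_{i_3})\). Partial orders are regarded as subsets of \(Q\times Q\). *)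

theory Defs
  imports Main
begin

definition ultra_tri :: "('q \<times> 'q) set \<Rightarrow> ('x \<Rightarrow> 'x \<Rightarrow> 'q) \<Rightarrow> 'x \<Rightarrow> 'x \<Rightarrow> 'x \<Rightarrow> bool" where
  "ultra_tri r d a b c \<longleftrightarrow> (d a c, d a b) \<in> r \<and> d a b = d b c"

definition pseudoultrametric ::
  "'x set \<Rightarrow> 'q set \<Rightarrow> ('q \<times> 'q) set \<Rightarrow> ('x \<Rightarrow> 'x \<Rightarrow> 'q) \<Rightarrow> bool" where
  "pseudoultrametric X Q r d \<longleftrightarrow>
     (\<forall>x\<in>X. \<forall>y\<in>X. d x y \<in> Q) \<and>
     (\<exists>q0\<in>Q. (\<forall>q\<in>Q. (q0, q) \<in> r) \<and> (\<forall>x\<in>X. d x x = q0)) \<and>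
     (\<forall>x\<in>X. \<forall>y\<in>X. d x y = d y x) \<and>
     (\<forall>x1\<in>X. \<forall>x2\<in>X. \<forall>x3\<in>X.
        ultra_tri r d x1 x2 x3 \<or> ultra_tri r d x1 x3 x2 \<or>
        ultra_tri r d x2 x1 x3 \<or> ultra_tri r d x2 x3 x1 \<or>
        ultra_tri r d x3 x1 x2 \<or> ultra_tri r d x3 x2 x1)"

end

theory Submission
  imports Defs
begin

text \<open>For a relation reflexive on Q under which d is a pseudoultrametric, the triangle condition
  on an ordered triple (a, b, c) holds exactly when d a b = d b c; it does not depend on the
  relation. So a triangle witness for one such order is a witness for all of them, and the
  intersection of all partial orders making d a pseudoultrametric is again one; it is the least.\<close>

lemma partial_order_on_Inter:
  assumes "F \<noteq> {}" and "\<forall>R\<in>F. partial_order_on A R"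
  shows "partial_order_on A (\<Inter>F)"
proof -
  obtain R where R: "R \<in> F" using assms(1) by blast
  have "refl_on A (\<Inter>F)"
    using assms(2) partial_order_onD(1) unfolding refl_on_def by blast
  moreover have "trans (\<Inter>F)"
    using assms(2) partial_order_onD(2) unfolding trans_def by blast
  moreover have "antisym (\<Inter>F)"
    using antisym_subset[OF Inter_lower[OF R]] partial_order_onD(3) R assms(2) by blast
  moreover have "\<Inter>F \<subseteq> A \<times> A"
    using R assms(2) partial_order_onD(4) by blast
  ultimately show ?thesis
    unfolding partial_order_on_def preorder_on_def by blast
qed

lemma pseudoultrametric_in_range:
  "pseudoultrametric X Q r d \<Longrightarrow> x \<in> X \<Longrightarrow> y \<in> X \<Longrightarrow> d x y \<in> Q"
  unfolding pseudoultrametric_def by blast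

lemma pseudoultrametric_diag_least:
  "pseudoultrametric X Q r d \<Longrightarrow> x \<in> X \<Longrightarrow> q \<in> Q \<Longrightarrow> (d x x, q) \<in> r"
  unfolding pseudoultrametric_def by metis

lemma pseudoultrametric_diag_eq:
  "pseudoultrametric X Q r d \<Longrightarrow> x \<in> X \<Longrightarrow> y \<in> X \<Longrightarrow> d x x = d y y"
  unfolding pseudoultrametric_def by metis

lemma pseudoultrametric_sym:
  "pseudoultrametric X Q r d \<Longrightarrow> x \<in> X \<Longrightarrow> y \<in> X \<Longrightarrow> d x y = d y x"
  unfolding pseudoultrametric_def by blast

lemma pseudoultrametric_triangle:
  "pseudoultrametric X Q r d \<Longrightarrow> x1 \<in> X \<Longrightarrow> x2 \<in> X \<Longrightarrow> x3 \<in> X \<Longrightarrow>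
    ultra_tri r d x1 x2 x3 \<or> ultra_tri r d x1 x3 x2 \<or> ultra_tri r d x2 x1 x3 \<or>
    ultra_tri r d x2 x3 x1 \<or> ultra_tri r d x3 x1 x2 \<or> ultra_tri r d x3 x2 x1"
  unfolding pseudoultrametric_def by blast

lemma ultra_tri_iff_isosceles:
  assumes refl: "refl_on Q R" and pu: "pseudoultrametric X Q R d"
    and abc: "a \<in> X" "b \<in> X" "c \<in> X"
  shows "ultra_tri R d a b c \<longleftrightarrow> d a b = d b c"
proof
  assume iso: "d a b = d b c"
  show "ultra_tri R d a b c"
  proof (cases "d a c = d a b")
    case True
    with iso refl pseudoultrametric_in_range[OF pu abc(1,2)] show ?thesis
      unfolding ultra_tri_def refl_on_def by simp
  next
    case False
    have "d a b = d b a" "d a c = d c a" "d b c = d c b"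
      using pseudoultrametric_sym[OF pu] abc by blast+
    \<comment> \<open>an apex at a or at c would force d a c = d a b\<close>
    with False iso pseudoultrametric_triangle[OF pu abc] show ?thesis
      unfolding ultra_tri_def by auto
  qed
qed (simp add: ultra_tri_def)

lemma pseudoultrametric_Inter:
  assumes "X \<noteq> {}" and "F \<noteq> {}"
    and adm: "\<And>R. R \<in> F \<Longrightarrow> refl_on Q R \<and> pseudoultrametric X Q R d"
  shows "pseudoultrametric X Q (\<Inter>F) d"
proof -
  obtain x0 where x0: "x0 \<in> X" using assms(1) by blast
  obtain P where P: "P \<in> F" using assms(2) by blast
  with adm have reflP: "refl_on Q P" and puP: "pseudoultrametric X Q P d" by blast+
  have tri: "ultra_tri (\<Inter>F) d a b c"
    if abc: "a \<in> X" "b \<in> X" "c \<in> X" and triP: "ultra_tri P d a b c" for a b c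
  proof -
    have iso: "d a b = d b c"
      using ultra_tri_iff_isosceles[OF reflP puP abc] triP by blast
    have "ultra_tri R d a b c" if "R \<in> F" for R
      using ultra_tri_iff_isosceles[OF _ _ abc] adm[OF that] iso by blast
    then show ?thesis unfolding ultra_tri_def using P by blast
  qed
  show ?thesis
    unfolding pseudoultrametric_def
  proof (intro conjI ballI bexI[of _ "d x0 x0"])
    show "d x y \<in> Q" if "x \<in> X" "y \<in> X" for x y
      using pseudoultrametric_in_range[OF puP that] .
    show "d x0 x0 \<in> Q"
      using pseudoultrametric_in_range[OF puP x0 x0] .
    show "(d x0 x0, q) \<in> \<Inter>F" if "q \<in> Q" for q
      using pseudoultrametric_diag_least[OF _ x0 that] adm by blast
    show "d x x = d x0 x0" if "x \<in> X" for x
      using pseudoultrametric_diag_eq[OF puP that x0] .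
    show "d x y = d y x" if "x \<in> X" "y \<in> X" for x y
      using pseudoultrametric_sym[OF puP that] .
    show "ultra_tri (\<Inter>F) d x1 x2 x3 \<or> ultra_tri (\<Inter>F) d x1 x3 x2 \<or>
        ultra_tri (\<Inter>F) d x2 x1 x3 \<or> ultra_tri (\<Inter>F) d x2 x3 x1 \<or>
        ultra_tri (\<Inter>F) d x3 x1 x2 \<or> ultra_tri (\<Inter>F) d x3 x2 x1"
      if "x1 \<in> X" "x2 \<in> X" "x3 \<in> X" for x1 x2 x3
      using pseudoultrametric_triangle[OF puP that] tri that by blast
  qed
qed

theorem proposition3p21:
  fixes X :: "'x set" and Q :: "'q set" and P :: "('q \<times> 'q) set" and d :: "'x \<Rightarrow> 'x \<Rightarrow> 'q"
  assumes "X \<noteq> {}"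
    and "partial_order_on Q P"
    and "pseudoultrametric X Q P d"
  shows "\<exists>!P0. partial_order_on Q P0 \<and> pseudoultrametric X Q P0 d \<and>
           (\<forall>R. partial_order_on Q R \<and> pseudoultrametric X Q R d \<longrightarrow> P0 \<subseteq> R)"
proof -
  define F where "F = {R. partial_order_on Q R \<and> pseudoultrametric X Q R d}"
  have "F \<noteq> {}" using assms(2,3) F_def by blast
  have "partial_order_on Q (\<Inter>F)"
    using partial_order_on_Inter[OF \<open>F \<noteq> {}\<close>] F_def by blast
  moreover have "pseudoultrametric X Q (\<Inter>F) d"
    using pseudoultrametric_Inter[OF assms(1) \<open>F \<noteq> {}\<close>] partial_order_onD(1) F_def by blast
  moreover have "\<Inter>F \<subseteq> R" if "partial_order_on Q R" "pseudoultrametric X Q R d" for R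
    using that F_def by blast
  ultimately show ?thesis
    by (intro ex1I[of _ "\<Inter>F"]) blast+
qed

end
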